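(* Let $\mathbb{K}$ be a field and let $P_1, P_2 \in \mathbb{K}[X]$ be irreducible. If there exists a ring isomorphism $f : \mathbb{K}[X]/(P_1) \to \mathbb{K}[X]/(P_2)$ stabilizing $\mathbb{K}$ such that $Q_f' \neq 0$, then the rings $\mathbb{K}[X]/(P_1^n)$ and $\mathbb{K}[X]/(P_2^n)$ are isomorphic for all $n \geq 1$.
   Context: A ring homomorphism $f : A \to B$ between $\mathbb{K}$-algebras stabilizes $\mathbb{K}$ if there is a field automorphism $\sigma_f$ of $\mathbb{K}$ with $f(a) = \sigma_f(a)$ for all $a \in \mathbb{K}$. For a ring isomorphism $f : \mathbb{K}[X]/(P_1) \to \mathbb{K}[X]/(P_2)$ stabilizing $\mathbb{K}$, $Q_f$ is the unique polynomial of degree $< \deg P_2$ such that $f$ sends the class of $X$ to the class of $Q_f$; $'$ denotes the formal derivative. *)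

theory Defs
  imports "HOL-Computational_Algebra.Polynomial" "HOL-Algebra.QuotRing"
begin

definition poly_ring :: "'a::comm_ring_1 poly ring" where
  "poly_ring = \<lparr>carrier = UNIV, monoid.mult = (*), one = 1, zero = 0, add = (+)\<rparr>"

definition quot_poly :: "'a::comm_ring_1 poly \<Rightarrow> 'a poly set ring" where
  "quot_poly P = poly_ring Quot (PIdl\<^bsub>poly_ring\<^esub> P)"

definition pclass :: "'a::comm_ring_1 poly \<Rightarrow> 'a poly \<Rightarrow> 'a poly set" where
  "pclass P q = (PIdl\<^bsub>poly_ring\<^esub> P) +>\<^bsub>poly_ring\<^esub> q"

definition field_automorphism :: "('a::field \<Rightarrow> 'a) \<Rightarrow> bool" where
  "field_automorphism \<sigma> \<longleftrightarrow> bij \<sigma> \<and> (\<forall>a b. \<sigma> (a + b) = \<sigma> a + \<sigma> b)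
     \<and> (\<forall>a b. \<sigma> (a * b) = \<sigma> a * \<sigma> b) \<and> \<sigma> 1 = 1"

definition stabilizes_K ::
  "'a::field poly \<Rightarrow> 'a poly \<Rightarrow> ('a poly set \<Rightarrow> 'a poly set) \<Rightarrow> bool" where
  "stabilizes_K P1 P2 f \<longleftrightarrow> (\<exists>\<sigma>. field_automorphism \<sigma> \<and>
      (\<forall>a. f (pclass P1 [:a:]) = pclass P2 [:\<sigma> a:]))"

definition Q_f :: "'a::field poly \<Rightarrow> 'a poly \<Rightarrow> ('a poly set \<Rightarrow> 'a poly set) \<Rightarrow> 'a poly" where
  "Q_f P1 P2 f = (THE Q. degree Q < degree P2 \<and> f (pclass P1 [:0, 1:]) = pclass P2 Q)"

end

(* The isomorphism f lifts to the ring endomorphism phi(A) = A^sigma(Q) of K[X] (apply sigma to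
   the coefficients, then substitute Q for X): P2 divides phi(A) iff P1 divides A, and phi is onto
   modulo P2. As deg Q < deg P2 and Q' <> 0, P2 does not divide Q', and this forbids P2^2 | phi(P1):
   differentiating phi(P1) would give P1 | P1', and then for A with phi(A) = X mod P2 one finds
   P1 | A', so that B = Q^(sigma^-1)(A), which is X mod P1, would satisfy both P1 | B' and
   B' = 1 mod P1. Hence phi(P1) = P2 T with T invertible modulo P2, and a Hensel-type induction
   shows that P2^n | phi(A) iff P1^n | A and that phi is onto modulo P2^n, so phi induces an
   isomorphism K[X]/(P1^n) -> K[X]/(P2^n). *)

theory Submission
  imports Defs "HOL-Computational_Algebra.Polynomial_Factorial"
begin

section \<open>The quotient rings K[X]/(P)\<close>

lemma poly_ring_simps [simp]:
  "carrier poly_ring = UNIV" "mult poly_ring = (*)" "add poly_ring = (+)"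
  "one poly_ring = 1" "zero poly_ring = 0"
  by (simp_all add: poly_ring_def)

lemma cring_poly_ring: "cring (poly_ring :: 'a::comm_ring_1 poly ring)"
proof (rule cringI)
  show "abelian_group (poly_ring :: 'a poly ring)"
  proof (rule abelian_groupI)
    fix x :: "'a poly"
    show "\<exists>y\<in>carrier poly_ring. y \<oplus>\<^bsub>poly_ring\<^esub> x = \<zero>\<^bsub>poly_ring\<^esub>"
      by (rule bexI[of _ "- x"]) simp_all
  qed (simp_all add: algebra_simps)
  show "Group.comm_monoid (poly_ring :: 'a poly ring)"
    by (rule comm_monoidI) (simp_all add: algebra_simps)
qed (simp_all add: algebra_simps)

lemma PIdl_poly_ring: "PIdl\<^bsub>poly_ring\<^esub> (P::'a::comm_ring_1 poly) = {A. P dvd A}"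
  by (auto simp: cgenideal_def dvd_def mult.commute)

lemma ideal_PIdl_poly_ring: "ideal (PIdl\<^bsub>poly_ring\<^esub> (P::'a::comm_ring_1 poly)) poly_ring"
  using cring.cgenideal_ideal[OF cring_poly_ring] by simp

lemma pclass_eq: "pclass P q = {A. P dvd A - q}"
proof -
  have "A \<in> pclass P q \<longleftrightarrow> P dvd A - q" for A
    by (auto simp: pclass_def PIdl_poly_ring a_r_coset_def r_coset_def
        intro!: exI[of _ "A - q"])
  then show ?thesis by blast
qed

lemma pclass_eq_iff: "pclass P a = pclass P b \<longleftrightarrow> P dvd a - b"
proof
  assume "pclass P a = pclass P b"
  moreover have "a \<in> pclass P a" by (simp add: pclass_eq)
  ultimately show "P dvd a - b" by (simp add: pclass_eq)
next
  assume "P dvd a - b"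
  then have "P dvd A - a \<longleftrightarrow> P dvd A - b" for A
    by (metis diff_add_cancel diff_diff_eq2 dvd_add_left_iff)
  then show "pclass P a = pclass P b" by (simp add: pclass_eq)
qed

lemma carrier_quot_poly: "carrier (quot_poly P) = range (pclass P)"
  unfolding quot_poly_def FactRing_def A_RCOSETS_def' pclass_def by auto

lemma quot_poly_add: "pclass P a \<oplus>\<^bsub>quot_poly P\<^esub> pclass P b = pclass P (a + b)"
  using ideal.a_rcos_sum[OF ideal_PIdl_poly_ring[of P], of a b]
  unfolding quot_poly_def FactRing_def pclass_def by simp

lemma quot_poly_mult: "pclass P a \<otimes>\<^bsub>quot_poly P\<^esub> pclass P b = pclass P (a * b)"
  using ideal.rcoset_mult_add[OF ideal_PIdl_poly_ring[of P], of a b]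
  unfolding quot_poly_def FactRing_def pclass_def by simp

lemma quot_poly_one: "\<one>\<^bsub>quot_poly P\<^esub> = pclass P 1"
  unfolding quot_poly_def FactRing_def pclass_def by simp

lemma quot_poly_zero: "\<zero>\<^bsub>quot_poly P\<^esub> = pclass P 0"
proof -
  have "pclass P 0 = PIdl\<^bsub>poly_ring\<^esub> P"
    by (simp add: pclass_eq PIdl_poly_ring)
  then show ?thesis unfolding quot_poly_def FactRing_def by simp
qed

lemma ex1_pclass_degree_less:
  fixes P C :: "'a::field poly"
  assumes "degree P \<noteq> 0"
  shows "\<exists>!Q. degree Q < degree P \<and> pclass P C = pclass P Q"
proof -
  have dvd_mod: "P dvd C - C mod P"
    by (metis minus_mod_eq_mult_div dvd_triv_left)
  have degree_mod: "degree (C mod P) < degree P"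
    using assms degree_mod_less[of P C] by (cases "P = 0") auto
  show ?thesis
  proof (rule ex1I)
    show "degree (C mod P) < degree P \<and> pclass P C = pclass P (C mod P)"
      using dvd_mod degree_mod by (simp add: pclass_eq_iff)
  next
    fix Q assume Q: "degree Q < degree P \<and> pclass P C = pclass P Q"
    then have "P dvd C - Q" by (simp add: pclass_eq_iff)
    with dvd_mod have "P dvd (C - C mod P) - (C - Q)" by (rule dvd_diff)
    then have "P dvd Q - C mod P" by simp
    moreover have "degree (Q - C mod P) < degree P"
      using Q degree_mod degree_diff_le_max[of Q "C mod P"] by auto
    ultimately show "Q = C mod P"
      by (metis dvd_imp_degree_le leD eq_iff_diff_eq_0)
  qed
qed

lemma quot_poly_iso_if_hom_onto:
  fixes h :: "'a::comm_ring_1 poly \<Rightarrow> 'a poly"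
  assumes add: "\<And>A B. h (A + B) = h A + h B" and mult: "\<And>A B. h (A * B) = h A * h B"
    and one: "h 1 = 1"
    and kernel: "\<And>A. R dvd h A \<longleftrightarrow> P dvd A" and onto: "\<And>C. \<exists>A. R dvd C - h A"
  shows "quot_poly P \<simeq> quot_poly R"
proof -
  define g where "g A = pclass R (h A)" for A
  have "g \<in> ring_hom poly_ring (quot_poly R)"
    by (rule ring_hom_memI)
      (simp_all add: g_def carrier_quot_poly quot_poly_add quot_poly_mult quot_poly_one add mult one)
  then have hom: "ring_hom_ring poly_ring (quot_poly R) g"
    using cring.axioms(1)[OF cring_poly_ring] ideal.quotient_is_ring[OF ideal_PIdl_poly_ring]
    by (intro ring_hom_ringI2) (simp_all add: quot_poly_def)
  have "carrier (quot_poly R) \<subseteq> g ` carrier poly_ring"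
  proof
    fix S assume "S \<in> carrier (quot_poly R)"
    then obtain C where C: "S = pclass R C" by (auto simp: carrier_quot_poly)
    obtain A where "R dvd C - h A" using onto by blast
    then have "S = g A" by (simp add: C g_def pclass_eq_iff)
    then show "S \<in> g ` carrier poly_ring" by simp
  qed
  then have onto_g: "g ` carrier poly_ring = carrier (quot_poly R)"
    by (auto simp: g_def carrier_quot_poly)
  have "a_kernel poly_ring (quot_poly R) g = PIdl\<^bsub>poly_ring\<^esub> P"
    by (auto simp: a_kernel_def' PIdl_poly_ring g_def quot_poly_zero pclass_eq_iff kernel)
  then show ?thesis
    using ring_hom_ring.FactRing_iso[OF hom onto_g] by (simp add: quot_poly_def)
qed

section \<open>Derivatives and Bezout identities for polynomials\<close>

lemma sq_dvd_imp_dvd_pderiv: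
  fixes P F :: "'a::idom poly"
  assumes "P^2 dvd F"
  shows "P dvd pderiv F"
proof -
  from assms obtain S where "F = P^2 * S" by (rule dvdE)
  then have "F = P * (P * S)" by (simp add: power2_eq_square mult.assoc)
  then have "pderiv F = P * (pderiv (P * S) + S * pderiv P)"
    by (simp add: pderiv_mult algebra_simps)
  then show ?thesis by simp
qed

lemma dvd_pderiv_diff:
  fixes P A B :: "'a::idom poly"
  assumes "P dvd pderiv P" and "P dvd A - B"
  shows "P dvd pderiv A - pderiv B"
proof -
  obtain V where "A - B = P * V" using assms(2) by (rule dvdE)
  then have "pderiv A - pderiv B = P * pderiv V + V * pderiv P"
    by (metis pderiv_diff pderiv_mult add.commute mult.commute)
  then show ?thesis using assms(1) by simp
qed

lemma pcompose_shift_taylor: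
  fixes p H :: "'a::idom poly"
  shows "H^2 dvd pcompose p ([:0, 1:] + H) - p - pderiv p * H"
proof (induction p)
  case 0
  then show ?case by simp
next
  case (pCons a p)
  define X :: "'a poly" where "X = [:0, 1:]"
  from pCons.IH obtain S where "pcompose p (X + H) - p - pderiv p * H = H^2 * S"
    unfolding X_def by (rule dvdE)
  then have S: "pcompose p (X + H) = p + pderiv p * H + H^2 * S"
    by (simp add: algebra_simps)
  have L: "pcompose (pCons a p) (X + H) = [:a:] + (X + H) * (p + pderiv p * H + H^2 * S)"
    by (simp only: pcompose_pCons S)
  have P: "pCons a p = [:a:] + X * p" by (simp add: X_def)
  have D: "pderiv (pCons a p) = p + X * pderiv p" by (simp add: X_def pderiv_pCons)
  have "pcompose (pCons a p) (X + H) - pCons a p - pderiv (pCons a p) * H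
      = H^2 * (X * S + pderiv p + H * S)"
    unfolding L D by (subst P) (simp add: algebra_simps power2_eq_square)
  then show ?case unfolding X_def by simp
qed

lemma pcompose_shift_dvd:
  fixes p H :: "'a::idom poly"
  shows "H dvd pcompose p ([:0, 1:] + H) - p"
proof -
  have "H dvd pcompose p ([:0, 1:] + H) - p - pderiv p * H"
    using pcompose_shift_taylor[of H p] by (rule dvd_trans[rotated]) (simp add: power2_eq_square)
  then show ?thesis by (metis diff_add_cancel dvd_add dvd_triv_right)
qed

lemma degree_pderiv_le: "degree (pderiv p) \<le> degree p"
  by (rule degree_le) (auto simp: coeff_pderiv coeff_eq_0)

lemma not_dvd_pderiv_if_degree_less:
  fixes P Q :: "'a::idom poly"
  assumes "degree Q < degree P" and "pderiv Q \<noteq> 0"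
  shows "\<not> P dvd pderiv Q"
proof
  assume "P dvd pderiv Q"
  then have "degree P \<le> degree (pderiv Q)" using assms(2) by (rule dvd_imp_degree_le)
  then show False using assms(1) degree_pderiv_le[of Q] by linarith
qed

lemma poly_bezout:
  fixes a b :: "'a::field poly"
  shows "\<exists>d u v. d dvd a \<and> d dvd b \<and> u * a + v * b = d"
proof (induction b arbitrary: a rule: measure_induct_rule[where f = degree])
  case (less b)
  consider "b = 0" | "b dvd a" | "b \<noteq> 0" "\<not> b dvd a" by blast
  then show ?case
  proof cases
    case 1
    then show ?thesis by (intro exI[of _ a] exI[of _ 1] exI[of _ 0]) simp
  next
    case 2
    then show ?thesis by (intro exI[of _ b] exI[of _ 0] exI[of _ 1]) simp
  next
    case 3
    then have "b \<noteq> 0" and "a mod b \<noteq> 0" by (auto simp: mod_eq_0_iff_dvd)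
    then have "degree (a mod b) < degree b" by (rule degree_mod_less')
    then obtain d u v where d: "d dvd b" "d dvd a mod b" "u * b + v * (a mod b) = d"
      using less.IH by blast
    have "d dvd a" using d(1,2) by (metis div_mult_mod_eq dvd_add dvd_mult)
    moreover have "v * a + (u - v * (a div b)) * b = d"
    proof -
      have "v * a + (u - v * (a div b)) * b = u * b + v * (a - a div b * b)"
        by (simp add: algebra_simps)
      also have "\<dots> = d" using d(3) by (simp add: minus_div_mult_eq_mod)
      finally show ?thesis .
    qed
    ultimately show ?thesis using d(1) by blast
  qed
qed

lemma irreducible_imp_invertible_mod:
  fixes P T :: "'a::field poly"
  assumes "irreducible P" and "\<not> P dvd T"
  shows "\<exists>V. P dvd T * V - 1"
proof -
  obtain d u v where d: "d dvd P" "d dvd T" "u * P + v * T = d"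
    using poly_bezout by blast
  have "is_unit d"
    using assms d(1,2) by (metis dvd_trans irreducible_altdef)
  then obtain e where "1 = d * e" by (rule dvdE)
  then have one: "(u * P + v * T) * e = 1" using d(3) by simp
  have "T * (v * e) - 1 = T * (v * e) - (u * P + v * T) * e" by (simp only: one)
  also have "\<dots> = P * (- u * e)" by (simp add: algebra_simps)
  finally have "P dvd T * (v * e) - 1" by (rule dvdI)
  then show ?thesis by blast
qed

section \<open>Substitution twisted by a field automorphism\<close>

(* The lift to K[X] of a ring isomorphism K[X]/(P1) -> K[X]/(P2) acting as sigma on K and
   sending the class of X to the class of Q. *)
definition twisted_subst :: "('a::field \<Rightarrow> 'a) \<Rightarrow> 'a poly \<Rightarrow> 'a poly \<Rightarrow> 'a poly" where
  "twisted_subst \<sigma> Q A = pcompose (map_poly \<sigma> A) Q"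

lemma twisted_subst_0 [simp]: "twisted_subst \<sigma> Q 0 = 0"
  by (simp add: twisted_subst_def)

context
  fixes \<sigma> :: "'a::field \<Rightarrow> 'a"
  assumes \<sigma>: "field_automorphism \<sigma>"
begin

lemma automorphism_add: "\<sigma> (a + b) = \<sigma> a + \<sigma> b"
  and automorphism_mult: "\<sigma> (a * b) = \<sigma> a * \<sigma> b"
  and automorphism_1: "\<sigma> 1 = 1"
  and automorphism_surj: "surj \<sigma>"
  using \<sigma> by (auto simp: field_automorphism_def bij_def)

lemma automorphism_0: "\<sigma> 0 = 0"
proof -
  have "\<sigma> 0 + \<sigma> 0 = \<sigma> 0 + 0" using automorphism_add[of 0 0] by simp
  then show ?thesis by (rule add_left_imp_eq)
qed

lemma automorphism_of_nat: "\<sigma> (of_nat n) = of_nat n"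
  by (induction n) (simp_all add: automorphism_0 automorphism_add automorphism_1)

lemma map_poly_automorphism_add: "map_poly \<sigma> (p + q) = map_poly \<sigma> p + map_poly \<sigma> q"
  by (intro poly_eqI) (simp add: coeff_map_poly automorphism_0 automorphism_add)

lemma map_poly_automorphism_mult: "map_poly \<sigma> (p * q) = map_poly \<sigma> p * map_poly \<sigma> q"
proof (induction p)
  case (pCons a p)
  have "map_poly \<sigma> (smult a q) = smult (\<sigma> a) (map_poly \<sigma> q)"
    by (rule map_poly_smult) (simp_all add: automorphism_0 automorphism_mult)
  with pCons show ?case
    by (simp add: map_poly_pCons automorphism_0 map_poly_automorphism_add)
qed simp

lemma map_poly_automorphism_pcompose:
  "map_poly \<sigma> (pcompose p q) = pcompose (map_poly \<sigma> p) (map_poly \<sigma> q)"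
  by (induction p) (simp_all add: map_poly_pCons automorphism_0 map_poly_automorphism_add
      map_poly_automorphism_mult pcompose_pCons)

lemma map_poly_automorphism_pderiv: "map_poly \<sigma> (pderiv p) = pderiv (map_poly \<sigma> p)"
  by (intro poly_eqI) (simp add: coeff_map_poly coeff_pderiv automorphism_0 automorphism_mult
      automorphism_of_nat del: of_nat_Suc)

lemma map_poly_automorphism_inv: "map_poly \<sigma> (map_poly (inv_into UNIV \<sigma>) p) = p"
proof -
  have "inv_into UNIV \<sigma> 0 = 0" using automorphism_0 \<sigma>
    by (metis bij_def field_automorphism_def inv_f_f)
  then show ?thesis
    by (simp add: map_poly_map_poly automorphism_0 o_def surj_f_inv_f[OF automorphism_surj])
qed

lemma twisted_subst_add: "twisted_subst \<sigma> Q (A + B) = twisted_subst \<sigma> Q A + twisted_subst \<sigma> Q B"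
  by (simp add: twisted_subst_def map_poly_automorphism_add pcompose_add)

lemma twisted_subst_mult: "twisted_subst \<sigma> Q (A * B) = twisted_subst \<sigma> Q A * twisted_subst \<sigma> Q B"
  by (simp add: twisted_subst_def map_poly_automorphism_mult pcompose_mult)

lemma twisted_subst_diff: "twisted_subst \<sigma> Q (A - B) = twisted_subst \<sigma> Q A - twisted_subst \<sigma> Q B"
  using twisted_subst_add[of Q "A - B" B] by simp

lemma twisted_subst_const: "twisted_subst \<sigma> Q [:a:] = [:\<sigma> a:]"
  by (simp add: twisted_subst_def map_poly_pCons automorphism_0)

lemma twisted_subst_1: "twisted_subst \<sigma> Q 1 = 1"
  using twisted_subst_const[of Q 1] by (simp add: automorphism_1 one_pCons)

lemma twisted_subst_power: "twisted_subst \<sigma> Q (A ^ n) = twisted_subst \<sigma> Q A ^ n"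
  by (induction n) (simp_all add: twisted_subst_mult twisted_subst_1)

lemma twisted_subst_X: "twisted_subst \<sigma> Q [:0, 1:] = Q"
  by (simp add: twisted_subst_def map_poly_pCons automorphism_0 automorphism_1 pcompose_pCons)

lemma twisted_subst_pcompose:
  "twisted_subst \<sigma> Q (pcompose B A) = pcompose (map_poly \<sigma> B) (twisted_subst \<sigma> Q A)"
  by (simp add: twisted_subst_def map_poly_automorphism_pcompose pcompose_assoc)

lemma twisted_subst_pcompose_inv:
  "twisted_subst \<sigma> Q (pcompose (map_poly (inv_into UNIV \<sigma>) B) A) = pcompose B (twisted_subst \<sigma> Q A)"
  by (simp add: twisted_subst_pcompose map_poly_automorphism_inv)

lemma pderiv_twisted_subst:
  "pderiv (twisted_subst \<sigma> Q A) = twisted_subst \<sigma> Q (pderiv A) * pderiv Q"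
  by (simp add: twisted_subst_def pderiv_pcompose map_poly_automorphism_pderiv)

end

context
  fixes f :: "'a::field poly set \<Rightarrow> 'a poly set" and \<sigma> :: "'a \<Rightarrow> 'a" and P1 P2 Q :: "'a poly"
  assumes f: "f \<in> ring_iso (quot_poly P1) (quot_poly P2)"
    and \<sigma>: "field_automorphism \<sigma>"
    and f_const: "\<And>a. f (pclass P1 [:a:]) = pclass P2 [:\<sigma> a:]"
    and f_X: "f (pclass P1 [:0, 1:]) = pclass P2 Q"
begin

lemma ring_iso_pclass_eq: "f (pclass P1 A) = pclass P2 (twisted_subst \<sigma> Q A)"
proof (induction A)
  case 0
  show ?case using f_const[of 0] by (simp add: automorphism_0[OF \<sigma>])
next
  case (pCons a A)
  have hom: "f \<in> ring_hom (quot_poly P1) (quot_poly P2)"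
    using f by (simp add: ring_iso_def)
  have "f (pclass P1 ([:0, 1:] * A)) = f (pclass P1 [:0, 1:] \<otimes>\<^bsub>quot_poly P1\<^esub> pclass P1 A)"
    by (simp add: quot_poly_mult)
  also have "\<dots> = f (pclass P1 [:0, 1:]) \<otimes>\<^bsub>quot_poly P2\<^esub> f (pclass P1 A)"
    by (rule ring_hom_mult[OF hom]) (simp_all add: carrier_quot_poly)
  finally have f_mult: "f (pclass P1 ([:0, 1:] * A)) = pclass P2 (Q * twisted_subst \<sigma> Q A)"
    by (simp add: f_X pCons.IH quot_poly_mult)
  have "pCons a A = [:a:] + [:0, 1:] * A" by simp
  then have "f (pclass P1 (pCons a A))
      = f (pclass P1 [:a:] \<oplus>\<^bsub>quot_poly P1\<^esub> pclass P1 ([:0, 1:] * A))"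
    by (simp only: quot_poly_add)
  also have "\<dots> = f (pclass P1 [:a:]) \<oplus>\<^bsub>quot_poly P2\<^esub> f (pclass P1 ([:0, 1:] * A))"
    by (rule ring_hom_add[OF hom]) (simp_all add: carrier_quot_poly)
  also have "\<dots> = pclass P2 ([:\<sigma> a:] + Q * twisted_subst \<sigma> Q A)"
    by (simp only: f_const f_mult quot_poly_add)
  also have "[:\<sigma> a:] + Q * twisted_subst \<sigma> Q A = twisted_subst \<sigma> Q (pCons a A)"
    unfolding \<open>pCons a A = [:a:] + [:0, 1:] * A\<close>
    by (simp only: twisted_subst_add[OF \<sigma>] twisted_subst_mult[OF \<sigma>] twisted_subst_const[OF \<sigma>]
        twisted_subst_X[OF \<sigma>])
  finally show ?case .
qed

lemma ring_iso_dvd_twisted_subst_iff: "P2 dvd twisted_subst \<sigma> Q A \<longleftrightarrow> P1 dvd A"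
proof -
  have "inj_on f (carrier (quot_poly P1))"
    using f by (simp add: ring_iso_def bij_betw_def)
  then have "f (pclass P1 A) = f (pclass P1 0) \<longleftrightarrow> pclass P1 A = pclass P1 0"
    by (auto simp: carrier_quot_poly dest: inj_onD)
  then show ?thesis by (simp add: ring_iso_pclass_eq pclass_eq_iff)
qed

lemma ring_iso_twisted_subst_onto: "\<exists>A. P2 dvd C - twisted_subst \<sigma> Q A"
proof -
  have "f ` carrier (quot_poly P1) = carrier (quot_poly P2)"
    using f by (simp add: ring_iso_def bij_betw_def)
  then have "pclass P2 C \<in> f ` range (pclass P1)" by (simp add: carrier_quot_poly)
  then obtain A where "pclass P2 C = f (pclass P1 A)" by blast
  then show ?thesis by (auto simp: ring_iso_pclass_eq pclass_eq_iff)
qed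

end

lemma Q_f_spec:
  fixes P1 P2 :: "'a::field poly"
  assumes "irreducible P2" and "f (pclass P1 [:0, 1:]) \<in> carrier (quot_poly P2)"
  shows "degree (Q_f P1 P2 f) < degree P2 \<and> f (pclass P1 [:0, 1:]) = pclass P2 (Q_f P1 P2 f)"
proof -
  obtain C where C: "f (pclass P1 [:0, 1:]) = pclass P2 C"
    using assms(2) by (auto simp: carrier_quot_poly)
  have "P2 \<noteq> 0" and "\<not> is_unit P2"
    using assms(1) by (auto simp: irreducible_def)
  then have "degree P2 \<noteq> 0" by (simp add: is_unit_iff_degree)
  then have "\<exists>!Q. degree Q < degree P2 \<and> f (pclass P1 [:0, 1:]) = pclass P2 Q"
    unfolding C by (rule ex1_pclass_degree_less)
  then show ?thesis unfolding Q_f_def by (rule theI')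
qed

section \<open>Lifting to K[X]/(P^n)\<close>

locale twisted_residue_iso =
  fixes \<sigma> :: "'a::field \<Rightarrow> 'a" and P1 P2 Q :: "'a poly"
  assumes automorphism: "field_automorphism \<sigma>"
    and irreducible_P1: "irreducible P1" and irreducible_P2: "irreducible P2"
    and dvd_twisted_subst_iff: "P2 dvd twisted_subst \<sigma> Q A \<longleftrightarrow> P1 dvd A"
    and twisted_subst_onto: "\<exists>A. P2 dvd C - twisted_subst \<sigma> Q A"
    and not_dvd_pderiv_Q: "\<not> P2 dvd pderiv Q"
begin

abbreviation \<phi> :: "'a poly \<Rightarrow> 'a poly" where
  "\<phi> \<equiv> twisted_subst \<sigma> Q"

lemma prime_P2: "prime_elem P2"
  using irreducible_P2 by (rule field_poly_irreducible_imp_prime)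

lemma dvd_pderiv_if_dvd_pderiv_twisted_subst:
  assumes "P2 dvd pderiv (\<phi> A)"
  shows "P1 dvd pderiv A"
proof -
  have "P2 dvd \<phi> (pderiv A) * pderiv Q"
    using assms by (simp add: pderiv_twisted_subst[OF automorphism])
  then have "P2 dvd \<phi> (pderiv A)"
    using prime_P2 not_dvd_pderiv_Q by (simp add: prime_elem_dvd_mult_iff)
  then show ?thesis by (simp add: dvd_twisted_subst_iff)
qed

context
  assumes sq_dvd: "P2^2 dvd \<phi> P1"
begin

lemma dvd_pderiv_P1: "P1 dvd pderiv P1"
  using sq_dvd_imp_dvd_pderiv[OF sq_dvd] by (rule dvd_pderiv_if_dvd_pderiv_twisted_subst)

lemma dvd_pderiv_preimage_of_X:
  assumes A: "\<phi> A = [:0, 1:] + P2 * W"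
  shows "P1 dvd pderiv A"
proof -
  (* phi(E) = P2(X + P2 W) is P2 (1 + P2' W) modulo P2^2 by Taylor, and P1 | E *)
  define E where "E = pcompose (map_poly (inv_into UNIV \<sigma>) P2) A"
  from pcompose_shift_taylor[of "P2 * W" P2] obtain S
    where "pcompose P2 ([:0, 1:] + P2 * W) - P2 - pderiv P2 * (P2 * W) = (P2 * W)^2 * S"
    by (rule dvdE)
  then have E: "\<phi> E = P2 * (1 + pderiv P2 * W + P2 * (W^2 * S))"
    unfolding E_def twisted_subst_pcompose_inv[OF automorphism] A
    by (simp add: algebra_simps power2_eq_square)
  then have "P2 dvd \<phi> E" by simp
  then have "P1 dvd E" by (simp add: dvd_twisted_subst_iff)
  then have "\<phi> P1 dvd \<phi> E" by (auto simp: twisted_subst_mult[OF automorphism])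
  then have "P2 * P2 dvd P2 * (1 + pderiv P2 * W + P2 * (W^2 * S))"
    using sq_dvd dvd_trans unfolding E power2_eq_square by blast
  then have "P2 dvd (1 + pderiv P2 * W) + P2 * (W^2 * S)"
    using irreducible_P2 by (simp add: irreducible_def add.assoc)
  then have "P2 dvd 1 + pderiv P2 * W" by (simp add: dvd_add_left_iff)
  moreover have "pderiv (\<phi> A) = (1 + pderiv P2 * W) + P2 * pderiv W"
    unfolding A by (simp add: pderiv_add pderiv_mult pderiv_pCons algebra_simps)
  ultimately have "P2 dvd pderiv (\<phi> A)" by simp
  then show ?thesis by (rule dvd_pderiv_if_dvd_pderiv_twisted_subst)
qed

end

lemma not_sq_dvd_twisted_subst_P1: "\<not> P2^2 dvd \<phi> P1"
proof
  assume sq_dvd: "P2^2 dvd \<phi> P1"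
  obtain A where "P2 dvd [:0, 1:] - \<phi> A" using twisted_subst_onto by blast
  then obtain W where "[:0, 1:] - \<phi> A = P2 * W" by (rule dvdE)
  then have A: "\<phi> A = [:0, 1:] + P2 * (- W)" by (simp add: algebra_simps)
  define B where "B = pcompose (map_poly (inv_into UNIV \<sigma>) Q) A"
  have "P2 dvd pcompose Q ([:0, 1:] + P2 * (- W)) - Q"
    by (rule dvd_trans[OF _ pcompose_shift_dvd]) simp
  then have "P2 dvd \<phi> (B - [:0, 1:])"
    by (simp add: B_def A twisted_subst_diff[OF automorphism]
        twisted_subst_pcompose_inv[OF automorphism] twisted_subst_X[OF automorphism])
  then have "P1 dvd B - [:0, 1:]" by (simp add: dvd_twisted_subst_iff)
  then have "P1 dvd pderiv B - pderiv [:0, 1:]"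
    by (rule dvd_pderiv_diff[OF dvd_pderiv_P1[OF sq_dvd]])
  moreover have "pderiv [:0, 1:] = (1 :: 'a poly)" by (simp add: pderiv_pCons one_pCons)
  moreover have "P1 dvd pderiv B"
    using dvd_pderiv_preimage_of_X[OF sq_dvd A] by (simp add: B_def pderiv_pcompose)
  ultimately have "P1 dvd pderiv B - (pderiv B - 1)" by (metis dvd_diff)
  then have "P1 dvd 1" by simp
  then show False using irreducible_P1 by (simp add: irreducible_def)
qed

lemma twisted_subst_P1_eq:
  obtains T where "\<phi> P1 = P2 * T" and "\<not> P2 dvd T"
proof -
  obtain T where T: "\<phi> P1 = P2 * T" using dvd_twisted_subst_iff[of P1] by (auto elim: dvdE)
  moreover have "\<not> P2 dvd T"
    using not_sq_dvd_twisted_subst_P1 by (auto simp: T power2_eq_square)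
  ultimately show ?thesis using that by blast
qed

lemma power_dvd_twisted_subst_iff: "P2^n dvd \<phi> A \<longleftrightarrow> P1^n dvd A"
proof
  obtain T where T: "\<phi> P1 = P2 * T" and not_dvd_T: "\<not> P2 dvd T" by (rule twisted_subst_P1_eq)
  show "P1^n dvd A" if "P2^n dvd \<phi> A"
    using that
  proof (induction n arbitrary: A)
    case (Suc n)
    have "P2 dvd P2^Suc n" by simp
    then have "P2 dvd \<phi> A" using Suc.prems by (rule dvd_trans)
    then obtain A1 where A1: "A = P1 * A1" by (auto simp: dvd_twisted_subst_iff elim: dvdE)
    have "P2 * P2^n dvd P2 * (T * \<phi> A1)"
      using Suc.prems by (simp add: A1 T twisted_subst_mult[OF automorphism] mult.assoc)
    then have "P2^n dvd T * \<phi> A1" using irreducible_P2 by (simp add: irreducible_def)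
    then have "P2^n dvd \<phi> A1"
      using prime_elem_power_dvd_cases[of P2 n T "\<phi> A1" 1 n] prime_P2 not_dvd_T by simp
    then show ?case by (simp add: A1 Suc.IH)
  qed simp
  show "P2^n dvd \<phi> A" if "P1^n dvd A"
  proof -
    from that obtain B where "A = P1^n * B" by (rule dvdE)
    then show ?thesis
      by (simp add: T twisted_subst_mult[OF automorphism] twisted_subst_power[OF automorphism]
          power_mult_distrib mult.assoc)
  qed
qed

lemma twisted_subst_onto_mod_power: "\<exists>A. P2^n dvd C - \<phi> A"
proof (induction n)
  case (Suc n)
  obtain T where T: "\<phi> P1 = P2 * T" and "\<not> P2 dvd T" by (rule twisted_subst_P1_eq)
  then have "\<not> P2 dvd T^n" using prime_P2 prime_elem_dvd_power by blast
  then obtain V where V: "P2 dvd T^n * V - 1"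
    using irreducible_P2 irreducible_imp_invertible_mod by blast
  from Suc.IH obtain A D where D: "C - \<phi> A = P2^n * D" by (blast elim: dvdE)
  (* correct A by P1^n B, where phi(B) is D / T^n modulo P2 *)
  obtain B where B: "P2 dvd D * V - \<phi> B" using twisted_subst_onto by blast
  have "\<phi> (P1^n * B) = P2^n * (T^n * \<phi> B)"
    by (simp add: T twisted_subst_mult[OF automorphism] twisted_subst_power[OF automorphism]
        power_mult_distrib)
  then have "C - \<phi> (A + P1^n * B) = P2^n * (D - T^n * \<phi> B)"
    using D by (simp add: twisted_subst_add[OF automorphism] algebra_simps)
  moreover have "P2 dvd D - T^n * \<phi> B"
  proof -
    have "P2 dvd 1 - T^n * V" using V by (metis dvd_minus_iff minus_diff_eq)
    then have "P2 dvd D * (1 - T^n * V) + T^n * (D * V - \<phi> B)" using B by simp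
    also have "D * (1 - T^n * V) + T^n * (D * V - \<phi> B) = D - T^n * \<phi> B"
      by (simp add: algebra_simps)
    finally show ?thesis .
  qed
  ultimately have "P2^Suc n dvd C - \<phi> (A + P1^n * B)"
    by (simp add: power_Suc2 mult_dvd_mono)
  then show ?case by blast
qed simp

theorem quot_poly_power_iso: "quot_poly (P1^n) \<simeq> quot_poly (P2^n)"
  by (rule quot_poly_iso_if_hom_onto[of \<phi>])
    (simp_all add: twisted_subst_add[OF automorphism] twisted_subst_mult[OF automorphism]
      twisted_subst_1[OF automorphism] power_dvd_twisted_subst_iff twisted_subst_onto_mod_power)

end

theorem mainTheorem14:
  fixes P1 P2 :: "'a::field poly"
    and f :: "'a poly set \<Rightarrow> 'a poly set"
  assumes "irreducible P1" and "irreducible P2"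
    and "f \<in> ring_iso (quot_poly P1) (quot_poly P2)"
    and "stabilizes_K P1 P2 f"
    and "pderiv (Q_f P1 P2 f) \<noteq> 0"
  shows "\<forall>n::nat. n \<ge> 1 \<longrightarrow> quot_poly (P1 ^ n) \<simeq> quot_poly (P2 ^ n)"
proof -
  obtain \<sigma> where \<sigma>: "field_automorphism \<sigma>"
    and f_const: "\<And>a. f (pclass P1 [:a:]) = pclass P2 [:\<sigma> a:]"
    using assms(4) unfolding stabilizes_K_def by blast
  define Q where "Q = Q_f P1 P2 f"
  have "f \<in> ring_hom (quot_poly P1) (quot_poly P2)"
    using assms(3) by (simp add: ring_iso_def)
  then have "f (pclass P1 [:0, 1:]) \<in> carrier (quot_poly P2)"
    by (rule ring_hom_closed) (simp add: carrier_quot_poly)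
  then have Q: "degree Q < degree P2" "f (pclass P1 [:0, 1:]) = pclass P2 Q"
    using Q_f_spec[OF assms(2)] unfolding Q_def by blast+
  have "\<not> P2 dvd pderiv Q"
    using Q(1) assms(5) unfolding Q_def by (rule not_dvd_pderiv_if_degree_less)
  then interpret twisted_residue_iso \<sigma> P1 P2 Q
    using assms(1,2) \<sigma> ring_iso_dvd_twisted_subst_iff[OF assms(3) \<sigma> f_const Q(2)]
      ring_iso_twisted_subst_onto[OF assms(3) \<sigma> f_const Q(2)]
    by unfold_locales blast+
  show ?thesis using quot_poly_power_iso by blast
qed

end
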